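(* Let $B>0$, $\mu>0$, and let $A:[0,\infty)\to[0,\infty)$ be such that \[ f(0)\;=\;\frac{B}{\mu}\int_0^\infty e^{-\mu\tau}A(\tau)\,d\tau \] is finite and $f(0)>1$. For $\theta\in(0,1]$ and $p>0$ let $F(\theta,p)$ denote the unique positive solution $x$ of \[ 1=\frac{B}{1+p-\theta}\int_0^\infty\!\!\int_0^\infty\Big(p\theta e^{-\theta a x}+(1+p)(1-\theta)e^{-(1+p)a x}\Big)e^{-\mu(a+\tau)}A(\tau)\,d\tau\,da, \] which equals \[ F(\theta,p)=\frac{\mu}{2}\left\{\Big(f(0)-\frac{1+p+\theta}{\theta(1+p)}\Big)+\sqrt{\Big(\frac{1+p+\theta}{\theta(1+p)}-f(0)\Big)^2+4\,\frac{f(0)-1}{\theta(1+p)}}\right\}. \] Then \[ \lim_{p\to\infty}F(\theta,p)=\begin{cases}0 & \text{if } \theta\le \frac{1}{f(0)},\\[2pt] \mu\big(f(0)-\frac{1}{\theta}\big) & \text{if } \frac{1}{f(0)}<\theta\le 1.\end{cases} \]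
   Context: Age-structured epidemic model with vaccination and constant per-capita mortality rate $\mu$ (survival function $e^{-\mu a}$): $B$ is the constant birth rate, $A(\tau)$ the expected contribution to the force of infection of an individual infected $\tau$ time units ago, $\theta$ the vaccine parameter (vaccinated susceptibles are infected at $\theta$ times the force of infection), and the vaccination rate equals $p$ times the force of infection. $F(\theta,p)$ is the endemic force of infection and $f(0)$ the basic reproduction number. *)

theory Defs
  imports "HOL-Analysis.Analysis"
begin

definition f0 :: "real \<Rightarrow> real \<Rightarrow> (real \<Rightarrow> real) \<Rightarrow> real" where
  "f0 B \<mu> A = B / \<mu> * (LINT \<tau>:{0..}|lborel. exp (- \<mu> * \<tau>) * A \<tau>)"

definition endemic_rhs :: "real \<Rightarrow> real \<Rightarrow> (real \<Rightarrow> real) \<Rightarrow> real \<Rightarrow> real \<Rightarrow> real \<Rightarrow> real" where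
  "endemic_rhs B \<mu> A \<theta> p x =
     B / (1 + p - \<theta>) *
     (LINT a:{0..}|lborel. LINT \<tau>:{0..}|lborel.
        (p * \<theta> * exp (- \<theta> * a * x) + (1 + p) * (1 - \<theta>) * exp (- (1 + p) * a * x))
        * exp (- \<mu> * (a + \<tau>)) * A \<tau>)"

definition F :: "real \<Rightarrow> real \<Rightarrow> (real \<Rightarrow> real) \<Rightarrow> real \<Rightarrow> real \<Rightarrow> real" where
  "F B \<mu> A \<theta> p = (THE x. x > 0 \<and> endemic_rhs B \<mu> A \<theta> p x = 1)"

end

theory Submission
  imports Defs "HOL-Probability.Sinc_Integral"
begin

text \<open>Integrating out the age a and the time since infection \<tau> turns the endemic equation into
  a quadratic equation for the force of infection x whose coefficients depend continuously on
  u = 1/(1 + p) and whose constant term is negative since f(0) > 1. Hence F(\<theta>, p) is its unique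
  positive root, and as p \<rightarrow> \<infinity>, i.e. u \<rightarrow> 0, it tends to the non-negative root of the limiting
  equation \<theta> x^2 + \<mu> (1 - f(0) \<theta>) x = 0, namely max 0 (\<mu> (f(0) \<theta> - 1)) / \<theta>.\<close>

lemma integral_exp_neg_atLeast_0:
  fixes c :: real
  assumes "c > 0"
  shows "set_integrable lborel {0..} (\<lambda>a. exp (- c * a))"
    and "(LINT a:{0..}|lborel. exp (- c * a)) = 1 / c"
proof -
  have ae: "AE x in lborel. indicator {0<..} x *\<^sub>R exp (- c * x) = indicator {0..} x *\<^sub>R exp (- c * x)"
    using AE_lborel_singleton[of 0] by eventually_elim (auto split: split_indicator)
  have "set_integrable lborel {0<..} (\<lambda>a. exp (- c * a))"
    using integrable_I0i_exp_mscale[OF assms] by (simp add: mult.commute)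
  then show "set_integrable lborel {0..} (\<lambda>a. exp (- c * a))"
    unfolding set_integrable_def by (rule integrable_cong_AE_imp[OF _ _ ae]) measurable
  have "(LINT a:{0..}|lborel. exp (- c * a)) = (LINT a:{0<..}|lborel. exp (- c * a))"
    unfolding set_lebesgue_integral_def using ae by (intro integral_cong_AE) auto
  also have "\<dots> = 1 / c"
    using LBINT_I0i_exp_mscale[OF assms] by (simp add: interval_lebesgue_integral_0_infty mult.commute)
  finally show "(LINT a:{0..}|lborel. exp (- c * a)) = 1 / c" .
qed

lemma endemic_rhs_closed_form:
  fixes B \<mu> \<theta> p x :: real and A :: "real \<Rightarrow> real"
  assumes "\<mu> > 0" "\<theta> > 0" "p > 0" "x > 0"
  shows "endemic_rhs B \<mu> A \<theta> p x = f0 B \<mu> A * \<mu> / (1 + p - \<theta>)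
     * (p * \<theta> / (\<theta> * x + \<mu>) + (1 + p) * (1 - \<theta>) / ((1 + p) * x + \<mu>))"
proof -
  define I where "I = (LINT \<tau>:{0..}|lborel. exp (- \<mu> * \<tau>) * A \<tau>)"
  define c\<^sub>1 where "c\<^sub>1 = \<theta> * x + \<mu>"
  define c\<^sub>2 where "c\<^sub>2 = (1 + p) * x + \<mu>"
  have c\<^sub>1: "c\<^sub>1 > 0" and c\<^sub>2: "c\<^sub>2 > 0"
    unfolding c\<^sub>1_def c\<^sub>2_def using assms by (simp_all add: add_pos_pos)
  define g where "g a = p * \<theta> * exp (- c\<^sub>1 * a) + (1 + p) * (1 - \<theta>) * exp (- c\<^sub>2 * a)" for a
  have integrand: "(p * \<theta> * exp (- \<theta> * a * x) + (1 + p) * (1 - \<theta>) * exp (- (1 + p) * a * x))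
        * exp (- \<mu> * (a + \<tau>)) * A \<tau> = g a * (exp (- \<mu> * \<tau>) * A \<tau>)" for a \<tau>
    unfolding g_def c\<^sub>1_def c\<^sub>2_def by (simp add: algebra_simps flip: exp_add)
  have "endemic_rhs B \<mu> A \<theta> p x = B / (1 + p - \<theta>) * (LINT a:{0..}|lborel. g a * I)"
    unfolding endemic_rhs_def integrand I_def set_integral_mult_right ..
  also have "(LINT a:{0..}|lborel. g a * I)
      = I * (p * \<theta> * (LINT a:{0..}|lborel. exp (- c\<^sub>1 * a))
             + (1 + p) * (1 - \<theta>) * (LINT a:{0..}|lborel. exp (- c\<^sub>2 * a)))"
    using integral_exp_neg_atLeast_0(1)[OF c\<^sub>1] integral_exp_neg_atLeast_0(1)[OF c\<^sub>2]
    unfolding g_def by (simp add: mult.commute)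
  also have "\<dots> = I * (p * \<theta> / c\<^sub>1 + (1 + p) * (1 - \<theta>) / c\<^sub>2)"
    using integral_exp_neg_atLeast_0(2)[OF c\<^sub>1] integral_exp_neg_atLeast_0(2)[OF c\<^sub>2]
    by simp
  finally show ?thesis
    using assms(1) unfolding f0_def I_def c\<^sub>1_def c\<^sub>2_def by simp
qed

definition pos_quadratic_root :: "real \<Rightarrow> real \<Rightarrow> real \<Rightarrow> real" where
  "pos_quadratic_root a b c = (- b + sqrt (b^2 - 4 * a * c)) / (2 * a)"

lemma pos_quadratic_root_iff:
  fixes a b c x :: real
  assumes "a > 0" "c < 0"
  shows "x > 0 \<and> a * x^2 + b * x + c = 0 \<longleftrightarrow> x = pos_quadratic_root a b c"
proof -
  define r where "r = pos_quadratic_root a b c"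
  define s where "s = sqrt (b^2 - 4 * a * c)"
  have disc: "b^2 < b^2 - 4 * a * c"
    using assms by (simp add: mult_pos_neg)
  then have "\<bar>b\<bar> < s"
    unfolding s_def by (metis real_sqrt_abs real_sqrt_less_iff)
  then have r_pos: "r > 0"
    unfolding r_def pos_quadratic_root_def s_def[symmetric] using assms(1) by simp
  have s_sq: "s^2 = b^2 - 4 * a * c"
    unfolding s_def using disc zero_le_power2[of b] by (intro real_sqrt_pow2) linarith
  have two_a_r: "2 * a * r = s - b"
    unfolding r_def pos_quadratic_root_def s_def[symmetric] using assms(1) by simp
  have "4 * a * (a * r^2 + b * r + c) = (2 * a * r)^2 + 2 * b * (2 * a * r) + 4 * a * c"
    by (simp add: algebra_simps power2_eq_square)
  also have "\<dots> = s^2 - b^2 + 4 * a * c"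
    unfolding two_a_r by (simp add: algebra_simps power2_eq_square)
  finally have "4 * a * (a * r^2 + b * r + c) = s^2 - b^2 + 4 * a * c" .
  then have r_root: "a * r^2 + b * r + c = 0"
    using s_sq assms(1) by simp
  have "x = r" if "x > 0" "a * x^2 + b * x + c = 0" for x
  proof (rule ccontr)
    assume "x \<noteq> r"
    \<comment> \<open>Two distinct roots would have product c / a < 0.\<close>
    have "(x - r) * (a * (x + r) + b) = 0"
      using that(2) r_root by (simp add: algebra_simps power2_eq_square)
    with \<open>x \<noteq> r\<close> have "b = - a * (x + r)"
      by simp
    with that(2) have "c = a * x * r"
      by (simp add: algebra_simps power2_eq_square)
    with assms that(1) r_pos show False
      by (metis mult_pos_pos not_less_iff_gr_or_eq)
  qed
  with r_pos r_root show ?thesis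
    unfolding r_def by blast
qed

lemma pos_quadratic_root_0:
  fixes a b :: real
  assumes "a > 0"
  shows "pos_quadratic_root a b 0 = max 0 (- b) / a"
  using assms unfolding pos_quadratic_root_def by (simp add: max_def)

lemma tendsto_pos_quadratic_root:
  fixes a b c :: "'a \<Rightarrow> real"
  assumes "(a \<longlongrightarrow> a\<^sub>0) G" "(b \<longlongrightarrow> b\<^sub>0) G" "(c \<longlongrightarrow> c\<^sub>0) G" "a\<^sub>0 \<noteq> 0"
  shows "((\<lambda>x. pos_quadratic_root (a x) (b x) (c x)) \<longlongrightarrow> pos_quadratic_root a\<^sub>0 b\<^sub>0 c\<^sub>0) G"
  unfolding pos_quadratic_root_def using assms by (intro tendsto_intros) auto

lemma endemic_equation_iff_quadratic:
  fixes f \<mu> \<theta> p x :: real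
  assumes "\<mu> > 0" "0 < \<theta>" "\<theta> \<le> 1" "p > 0" "x > 0"
  shows "f * \<mu> / (1 + p - \<theta>) * (p * \<theta> / (\<theta> * x + \<mu>) + (1 + p) * (1 - \<theta>) / ((1 + p) * x + \<mu>)) = 1
    \<longleftrightarrow> \<theta> * x^2 + \<mu> * (\<theta> / (1 + p) + 1 - f * \<theta>) * x + \<mu>^2 * (1 - f) / (1 + p) = 0"
proof -
  define q where "q = 1 + p"
  have q: "q > 0" "q - \<theta> > 0"
    using assms unfolding q_def by auto
  have d\<^sub>1: "\<theta> * x + \<mu> > 0" and d\<^sub>2: "q * x + \<mu> > 0"
    using assms q by (simp_all add: add_pos_pos)
  have "p * \<theta> / (\<theta> * x + \<mu>) + q * (1 - \<theta>) / (q * x + \<mu>)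
      = (q - \<theta>) * (q * \<theta> * x + \<mu>) / ((\<theta> * x + \<mu>) * (q * x + \<mu>))"
    using d\<^sub>1 d\<^sub>2 unfolding q_def by (simp add: field_simps)
  then have "f * \<mu> / (q - \<theta>) * (p * \<theta> / (\<theta> * x + \<mu>) + q * (1 - \<theta>) / (q * x + \<mu>))
      = f * \<mu> * (q * \<theta> * x + \<mu>) / ((\<theta> * x + \<mu>) * (q * x + \<mu>))"
    using q by simp
  then have "f * \<mu> / (q - \<theta>) * (p * \<theta> / (\<theta> * x + \<mu>) + q * (1 - \<theta>) / (q * x + \<mu>)) = 1
      \<longleftrightarrow> f * \<mu> * (q * \<theta> * x + \<mu>) = (\<theta> * x + \<mu>) * (q * x + \<mu>)"
    using d\<^sub>1 d\<^sub>2 by auto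
  also have "\<dots> \<longleftrightarrow> q * (\<theta> * x^2 + \<mu> * (\<theta> / q + 1 - f * \<theta>) * x + \<mu>^2 * (1 - f) / q) = 0"
  proof -
    have "q * (\<theta> * x^2 + \<mu> * (\<theta> / q + 1 - f * \<theta>) * x + \<mu>^2 * (1 - f) / q)
        = (\<theta> * x + \<mu>) * (q * x + \<mu>) - f * \<mu> * (q * \<theta> * x + \<mu>)"
      using q(1) by (simp add: field_simps power2_eq_square)
    then show ?thesis
      by linarith
  qed
  also have "\<dots> \<longleftrightarrow> \<theta> * x^2 + \<mu> * (\<theta> / q + 1 - f * \<theta>) * x + \<mu>^2 * (1 - f) / q = 0"
    using q by simp
  finally show ?thesis
    unfolding q_def .
qed

lemma F_eq_pos_quadratic_root:
  fixes B \<mu> \<theta> p :: real and A :: "real \<Rightarrow> real"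
  assumes "\<mu> > 0" "0 < \<theta>" "\<theta> \<le> 1" "p > 0" "f0 B \<mu> A > 1"
  shows "F B \<mu> A \<theta> p = pos_quadratic_root \<theta>
           (\<mu> * (\<theta> / (1 + p) + 1 - f0 B \<mu> A * \<theta>)) (\<mu>^2 * (1 - f0 B \<mu> A) / (1 + p))"
    (is "_ = ?r")
proof -
  have const_neg: "\<mu>^2 * (1 - f0 B \<mu> A) / (1 + p) < 0"
    using assms by (simp add: divide_neg_pos mult_pos_neg)
  have "x > 0 \<and> endemic_rhs B \<mu> A \<theta> p x = 1 \<longleftrightarrow> x = ?r" for x
  proof (cases "x > 0")
    case True
    have "endemic_rhs B \<mu> A \<theta> p x = 1 \<longleftrightarrow>
        \<theta> * x^2 + \<mu> * (\<theta> / (1 + p) + 1 - f0 B \<mu> A * \<theta>) * x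
          + \<mu>^2 * (1 - f0 B \<mu> A) / (1 + p) = 0"
      unfolding endemic_rhs_closed_form[OF assms(1,2,4) True]
      by (rule endemic_equation_iff_quadratic[OF assms(1-4) True])
    with True show ?thesis
      using pos_quadratic_root_iff[OF assms(2) const_neg] by blast
  next
    case False
    then show ?thesis
      using pos_quadratic_root_iff[OF assms(2) const_neg] by blast
  qed
  then show ?thesis
    unfolding F_def by simp
qed

theorem mainTheorem3:
  fixes B \<mu> \<theta> :: real and A :: "real \<Rightarrow> real"
  assumes "B > 0" and "\<mu> > 0"
    and "\<And>\<tau>. \<tau> \<ge> 0 \<Longrightarrow> A \<tau> \<ge> 0"
    and "set_integrable lborel {0..} (\<lambda>\<tau>. exp (- \<mu> * \<tau>) * A \<tau>)"
    and "f0 B \<mu> A > 1"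
    and "0 < \<theta>" and "\<theta> \<le> 1"
  shows "((\<lambda>p. F B \<mu> A \<theta> p) \<longlongrightarrow>
           (if \<theta> \<le> 1 / f0 B \<mu> A then 0 else \<mu> * (f0 B \<mu> A - 1 / \<theta>))) at_top"
proof -
  define f where "f = f0 B \<mu> A"
  have f: "f > 1"
    using assms(5) unfolding f_def .
  have eventually_eq: "\<forall>\<^sub>F p in at_top.
      pos_quadratic_root \<theta> (\<mu> * (\<theta> / (1 + p) + 1 - f * \<theta>)) (\<mu>^2 * (1 - f) / (1 + p)) = F B \<mu> A \<theta> p"
    using eventually_gt_at_top[of 0]
    by eventually_elim (simp add: F_eq_pos_quadratic_root assms f_def)
  have "filterlim (\<lambda>p::real. 1 + p) at_infinity at_top"
    by (intro filterlim_at_top_imp_at_infinity filterlim_tendsto_add_at_top[OF tendsto_const filterlim_ident])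
  then have "((\<lambda>p. \<mu> * (\<theta> / (1 + p) + 1 - f * \<theta>)) \<longlongrightarrow> \<mu> * (0 + 1 - f * \<theta>)) at_top"
    and "((\<lambda>p. \<mu>^2 * (1 - f) / (1 + p)) \<longlongrightarrow> 0) at_top"
    by (intro tendsto_intros tendsto_divide_0[OF tendsto_const]; assumption)+
  then have lim: "((\<lambda>p. pos_quadratic_root \<theta> (\<mu> * (\<theta> / (1 + p) + 1 - f * \<theta>))
      (\<mu>^2 * (1 - f) / (1 + p))) \<longlongrightarrow> pos_quadratic_root \<theta> (\<mu> * (1 - f * \<theta>)) 0) at_top"
    using tendsto_pos_quadratic_root[OF tendsto_const] assms(6) by fastforce
  have lim_value: "pos_quadratic_root \<theta> (\<mu> * (1 - f * \<theta>)) 0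
      = (if \<theta> \<le> 1 / f then 0 else \<mu> * (f - 1 / \<theta>))"
    using f assms(2,6) by (auto simp: pos_quadratic_root_0 max_def field_simps mult_le_0_iff)
  show ?thesis
    using Lim_transform_eventually[OF lim[unfolded lim_value] eventually_eq] unfolding f_def .
qed

end
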